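(* Let $U$ be a set and $\mathcal{C}\subset\mathcal{P}(U)$ a collection of subsets of $U$ with $\emptyset\in\mathcal{C}$. Then at least one of the following holds: (a) $\mathcal{C}=\mathcal{P}(X)$ for some $X\subset U$; (b) there exists $T\subset U$ with $|T|\ge2$ such that $\mathcal{C}\cap\mathcal{P}(T)=\mathcal{P}(T)-\{T\}$; (c) there exist $S\subset U$ with $|S|\ge2$ and $s\in S$ such that $\{C\in\mathcal{C}:\ s\in C\}\cap\mathcal{P}(S)=\{S\}$.
   Context: $\mathcal{P}(Y)$ denotes the power set of a set $Y$. *)

theory Defs
  imports Main
begin

end

theory Submission
  imports Defs
begin

text \<open>If some member of \<open>C\<close> contains a point \<open>s\<close> with \<open>{s} \<notin> C\<close>, an inclusion-minimal
  member \<open>S\<close> through \<open>s\<close> has at least two points and witnesses (c). Otherwise \<open>C\<close> contains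
  all singletons of \<open>X = \<Union>C\<close>; either \<open>C = Pow X\<close>, which is (a), or an inclusion-minimal
  subset \<open>T\<close> of \<open>X\<close> missing from \<open>C\<close> is neither empty nor a singleton and witnesses (b).\<close>

lemma two_le_card_iff_distinct:
  assumes "finite A"
  shows "2 \<le> card A \<longleftrightarrow> (\<exists>a\<in>A. \<exists>b\<in>A. a \<noteq> b)"
  using card_le_Suc0_iff_eq[OF assms] by auto

lemma ex_minimal_member_containing:
  assumes "finite U" "C \<subseteq> Pow U" "A \<in> C" "s \<in> A" "{s} \<notin> C"
  shows "\<exists>S \<subseteq> U. 2 \<le> card S \<and> s \<in> S \<and> {B \<in> C. s \<in> B} \<inter> Pow S = {S}"
proof -
  have "finite C" using assms(1,2) finite_subset by blast
  then have "finite {B \<in> C. s \<in> B}" by simp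
  then obtain S where S: "S \<in> C" "s \<in> S"
    and S_min: "\<And>B. B \<in> C \<Longrightarrow> s \<in> B \<Longrightarrow> B \<subseteq> S \<Longrightarrow> B = S"
    using finite_has_minimal2[of "{B \<in> C. s \<in> B}" A] assms(3,4) by (auto simp: eq_commute)
  have "S \<subseteq> U" using S(1) assms(2) by blast
  moreover have "2 \<le> card S"
  proof -
    have "S \<noteq> {s}" using S(1) assms(5) by blast
    then obtain t where "t \<in> S" "t \<noteq> s" using S(2) by blast
    then show ?thesis
      using S(2) \<open>S \<subseteq> U\<close> assms(1) two_le_card_iff_distinct finite_subset by metis
  qed
  moreover have "{B \<in> C. s \<in> B} \<inter> Pow S = {S}" using S S_min by blast
  ultimately show ?thesis using S(2) by blast
qed

lemma ex_minimal_nonmember: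
  assumes "finite X" "C \<subseteq> Pow X" "C \<noteq> Pow X" "{} \<in> C" "\<And>x. x \<in> X \<Longrightarrow> {x} \<in> C"
  shows "\<exists>T \<subseteq> X. 2 \<le> card T \<and> C \<inter> Pow T = Pow T - {T}"
proof -
  obtain T0 where "T0 \<in> Pow X - C" using assms(2,3) by blast
  then obtain T where T: "T \<subseteq> X" "T \<notin> C"
    and T_min: "\<And>D. D \<subseteq> X \<Longrightarrow> D \<notin> C \<Longrightarrow> D \<subseteq> T \<Longrightarrow> D = T"
    using finite_has_minimal2[of "Pow X - C" T0] assms(1) by (auto simp: eq_commute)
  have "2 \<le> card T"
  proof -
    obtain a where a: "a \<in> T" using T(2) assms(4) by (metis equals0I)
    have "T \<noteq> {a}" using T a assms(5) by blast
    then obtain b where "b \<in> T" "b \<noteq> a" using a by blast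
    then show ?thesis
      using a T(1) assms(1) two_le_card_iff_distinct finite_subset by metis
  qed
  moreover have "C \<inter> Pow T = Pow T - {T}"
    using T T_min assms(2) by blast
  ultimately show ?thesis using T(1) by blast
qed

theorem lemma2p4:
  fixes U :: "'a set" and C :: "'a set set"
  assumes "finite U" and "C \<subseteq> Pow U" and "{} \<in> C"
  shows "(\<exists>X. X \<subseteq> U \<and> C = Pow X)
       \<or> (\<exists>T. T \<subseteq> U \<and> card T \<ge> 2 \<and> C \<inter> Pow T = Pow T - {T})
       \<or> (\<exists>S s. S \<subseteq> U \<and> card S \<ge> 2 \<and> s \<in> S \<and> {A \<in> C. s \<in> A} \<inter> Pow S = {S})"
proof (cases "\<exists>A\<in>C. \<exists>s\<in>A. {s} \<notin> C")
  case True
  then obtain A s where "A \<in> C" "s \<in> A" "{s} \<notin> C" by blast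
  then obtain S where "S \<subseteq> U" "2 \<le> card S" "s \<in> S" "{B \<in> C. s \<in> B} \<inter> Pow S = {S}"
    using ex_minimal_member_containing[OF assms(1,2)] by metis
  then show ?thesis by metis
next
  case False
  define X where "X = \<Union>C"
  have "X \<subseteq> U" "C \<subseteq> Pow X" using assms(2) by (auto simp: X_def)
  show ?thesis
  proof (cases "C = Pow X")
    case True
    then show ?thesis using \<open>X \<subseteq> U\<close> by metis
  next
    case False
    moreover have "finite X" using \<open>X \<subseteq> U\<close> assms(1) finite_subset by blast
    moreover have "\<And>x. x \<in> X \<Longrightarrow> {x} \<in> C"
      using \<open>\<not> (\<exists>A\<in>C. \<exists>s\<in>A. {s} \<notin> C)\<close> unfolding X_def by blast
    ultimately obtain T where "T \<subseteq> X" "2 \<le> card T" "C \<inter> Pow T = Pow T - {T}"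
      using ex_minimal_nonmember[of X C] \<open>C \<subseteq> Pow X\<close> assms(3) by metis
    then show ?thesis using \<open>X \<subseteq> U\<close> by (metis order_trans)
  qed
qed

end
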